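(* Let $G=(V,E)$ be a prime permutation graph, let $(<_1,<_2)$ be a realizer of $G$, and let $w$ be the first element of $<_1$. Then the relations $\vartriangleleft_1^w$ and $\vartriangleleft_2^w$ are strict linear orders on $V$.
   Context: Graphs are finite, simple, undirected, with nonempty vertex set. A module of $G$ is a nonempty $M\subseteq V$ such that every vertex outside $M$ is adjacent to all or none of $M$; $G$ is prime if its only modules are $V$ and the singletons. A realizer of $G$ is a pair $(<_1,<_2)$ of strict linear orders on $V$ such that distinct $u,v$ are adjacent iff they appear in different orders in $<_1$ and $<_2$; $G$ is a permutation graph if it has a realizer. For a pair of binary relations $(\lhd_1,\lhd_2)$ on $V$: its transitive closure is $(\lhd_1^T,\lhd_2^T)$ (componentwise transitive closures); its closure under $E$ is $(\lhd_1^E,\lhd_2^E)$ where, for $i\in[2]$, $\lhd_i^E=\lhd_i\cup\{(v,u)\mid u\lhd_{3-i}v,\ \{u,v\}\in E\}\cup\{(u,v)\mid u\lhd_{3-i}v,\ \{u,v\}\notin E\}$. For $w\in V$ define $\lhd_{1,0}^w=\{(w,v)\mid v\in V, v\ne w\}$, $\lhd_{2,0}^w=\emptyset$, and for $k\ge0$, $(\lhd_{1,k+1}^w,\lhd_{2,k+1}^w)=((\lhd_{1,k}^w,\lhd_{2,k}^w)^E)^T$. These increase with $k$; $\lhd_i^w$ denotes $\lhd_{i,m}^w$ for $m$ such that the sequence has stabilized. *)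

theory Defs
  imports Main
begin

definition graph :: "'a set \<Rightarrow> 'a set set \<Rightarrow> bool" where
  "graph V E \<longleftrightarrow> finite V \<and> V \<noteq> {} \<and>
     (\<forall>e\<in>E. \<exists>u v. u \<in> V \<and> v \<in> V \<and> u \<noteq> v \<and> e = {u, v})"

definition is_module :: "'a set \<Rightarrow> 'a set set \<Rightarrow> 'a set \<Rightarrow> bool" where
  "is_module V E M \<longleftrightarrow> M \<subseteq> V \<and> M \<noteq> {} \<and>
     (\<forall>x \<in> V - M. (\<forall>m\<in>M. {x, m} \<in> E) \<or> (\<forall>m\<in>M. {x, m} \<notin> E))"

definition prime_graph :: "'a set \<Rightarrow> 'a set set \<Rightarrow> bool" where
  "prime_graph V E \<longleftrightarrow> (\<forall>M. is_module V E M \<longrightarrow> M = V \<or> (\<exists>v. M = {v}))"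

definition strict_linorder_on :: "'a set \<Rightarrow> 'a rel \<Rightarrow> bool" where
  "strict_linorder_on V r \<longleftrightarrow> r \<subseteq> V \<times> V \<and> irrefl_on V r \<and> trans r \<and> total_on V r"

definition realizer :: "'a set \<Rightarrow> 'a set set \<Rightarrow> 'a rel \<Rightarrow> 'a rel \<Rightarrow> bool" where
  "realizer V E r1 r2 \<longleftrightarrow> strict_linorder_on V r1 \<and> strict_linorder_on V r2 \<and>
     (\<forall>u\<in>V. \<forall>v\<in>V. u \<noteq> v \<longrightarrow>
        ({u, v} \<in> E \<longleftrightarrow> ((u, v) \<in> r1 \<and> (v, u) \<in> r2) \<or> ((v, u) \<in> r1 \<and> (u, v) \<in> r2)))"

definition permutation_graph :: "'a set \<Rightarrow> 'a set set \<Rightarrow> bool" where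
  "permutation_graph V E \<longleftrightarrow> graph V E \<and> (\<exists>r1 r2. realizer V E r1 r2)"

definition closE_comp :: "'a set set \<Rightarrow> 'a rel \<Rightarrow> 'a rel \<Rightarrow> 'a rel" where
  "closE_comp E li lo = li \<union> {(v, u). (u, v) \<in> lo \<and> {u, v} \<in> E}
                            \<union> {(u, v). (u, v) \<in> lo \<and> {u, v} \<notin> E}"

definition closE :: "'a set set \<Rightarrow> 'a rel \<times> 'a rel \<Rightarrow> 'a rel \<times> 'a rel" where
  "closE E p = (closE_comp E (fst p) (snd p), closE_comp E (snd p) (fst p))"

definition closT :: "'a rel \<times> 'a rel \<Rightarrow> 'a rel \<times> 'a rel" where
  "closT p = (trancl (fst p), trancl (snd p))"

primrec lhd_seq :: "'a set \<Rightarrow> 'a set set \<Rightarrow> 'a \<Rightarrow> nat \<Rightarrow> 'a rel \<times> 'a rel" where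
  "lhd_seq V E w 0 = ({(w, v) | v. v \<in> V \<and> v \<noteq> w}, {})"
| "lhd_seq V E w (Suc k) = closT (closE E (lhd_seq V E w k))"

definition lhd_lim :: "'a set \<Rightarrow> 'a set set \<Rightarrow> 'a \<Rightarrow> 'a rel \<times> 'a rel" where
  "lhd_lim V E w = lhd_seq V E w (LEAST m. \<forall>k\<ge>m. lhd_seq V E w k = lhd_seq V E w m)"

end

theory Submission
  imports Defs "HOL-Library.Product_Order"
begin

text \<open>Every stage of the sequence lies inside the realizer (r1, r2): closing a subpair of a
  realizer under E and transitivity cannot leave it. The sequence increases, so on a finite vertex
  set it becomes stationary at a transitive pair (L1, L2) closed under E; irreflexivity comes from
  the realizer, and totality of L2 from that of L1. If L1 left two vertices incomparable, the class
  of one of them under the reflexive-transitive closure of L1-incomparability would be a module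
  with at least two elements that misses w (which is L1-below every other vertex), contradicting
  primality.\<close>

lemma strict_linorder_on_asym:
  assumes "strict_linorder_on V r" "(u, v) \<in> r"
  shows "(v, u) \<notin> r"
  using assms by (auto simp: strict_linorder_on_def irrefl_on_def dest: transD)

lemma realizer_swap: "realizer V E r1 r2 \<Longrightarrow> realizer V E r2 r1"
  by (auto simp: realizer_def)

lemma realizer_same_direction_iff:
  assumes "realizer V E ra rb" "(u, v) \<in> rb"
  shows "(u, v) \<in> ra \<longleftrightarrow> {u, v} \<notin> E"
proof -
  have ra: "strict_linorder_on V ra" and rb: "strict_linorder_on V rb"
    using assms(1) by (auto simp: realizer_def)
  then have "u \<in> V" "v \<in> V" "u \<noteq> v"
    using assms(2) by (auto simp: strict_linorder_on_def irrefl_on_def)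
  moreover have "(v, u) \<notin> rb" using strict_linorder_on_asym[OF rb assms(2)] .
  ultimately have "{u, v} \<in> E \<longleftrightarrow> (v, u) \<in> ra"
    using assms by (auto simp: realizer_def)
  also have "\<dots> \<longleftrightarrow> (u, v) \<notin> ra"
    using ra \<open>u \<in> V\<close> \<open>v \<in> V\<close> \<open>u \<noteq> v\<close>
    by (auto simp: total_on_def strict_linorder_on_def dest: strict_linorder_on_asym[OF ra])
  finally show ?thesis by blast
qed

lemma closE_comp_subset_realizer:
  assumes "realizer V E ra rb" "A \<subseteq> ra" "B \<subseteq> rb"
  shows "closE_comp E A B \<subseteq> ra"
proof
  fix p assume p: "p \<in> closE_comp E A B"
  obtain x y where p_eq: "p = (x, y)" by fastforce
  have ra: "strict_linorder_on V ra" and rb: "strict_linorder_on V rb"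
    using assms(1) by (auto simp: realizer_def)
  from p p_eq consider "(x, y) \<in> A" | "(y, x) \<in> B" "{y, x} \<in> E" | "(x, y) \<in> B" "{x, y} \<notin> E"
    by (auto simp: closE_comp_def)
  then show "p \<in> ra"
  proof cases
    case 1
    then show ?thesis using assms(2) p_eq by blast
  next
    case 2
    then have "(y, x) \<in> rb" using assms(3) by blast
    with 2 have "(y, x) \<notin> ra" using realizer_same_direction_iff[OF assms(1)] by blast
    moreover have "x \<in> V" "y \<in> V" "x \<noteq> y"
      using rb \<open>(y, x) \<in> rb\<close> by (auto simp: strict_linorder_on_def irrefl_on_def)
    ultimately show ?thesis using ra p_eq by (auto simp: strict_linorder_on_def total_on_def)
  next
    case 3
    then show ?thesis using assms(3) realizer_same_direction_iff[OF assms(1)] p_eq by blast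
  qed
qed

lemma lhd_seq_le_realizer:
  assumes "realizer V E r1 r2" and "\<forall>v\<in>V. v \<noteq> w \<longrightarrow> (w, v) \<in> r1"
  shows "lhd_seq V E w k \<le> (r1, r2)"
proof (induction k)
  case 0
  then show ?case using assms(2) by (auto simp: less_eq_prod_def)
next
  case (Suc k)
  have "trans r1" "trans r2" using assms(1) by (auto simp: realizer_def strict_linorder_on_def)
  moreover have "closE_comp E (fst (lhd_seq V E w k)) (snd (lhd_seq V E w k)) \<subseteq> r1"
    and "closE_comp E (snd (lhd_seq V E w k)) (fst (lhd_seq V E w k)) \<subseteq> r2"
    using Suc closE_comp_subset_realizer[OF assms(1)]
      closE_comp_subset_realizer[OF realizer_swap[OF assms(1)]]
    by (auto simp: less_eq_prod_def)
  ultimately show ?case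
    by (auto simp: less_eq_prod_def closT_def closE_def dest: trancl_mono)
qed

lemma subset_trancl_closE_comp: "A \<subseteq> (closE_comp E A B)\<^sup>+"
  by (auto simp: closE_comp_def)

lemma mono_lhd_seq: "mono (lhd_seq V E w)"
  unfolding mono_iff_le_Suc
  by (simp add: less_eq_prod_def closT_def closE_def subset_trancl_closE_comp)

lemma lhd_lim_stable:
  assumes "finite V" "realizer V E r1 r2" "\<forall>v\<in>V. v \<noteq> w \<longrightarrow> (w, v) \<in> r1"
  obtains m where "lhd_lim V E w = lhd_seq V E w m"
    and "lhd_seq V E w (Suc m) = lhd_seq V E w m"
proof -
  let ?S = "lhd_seq V E w"
  have "r1 \<subseteq> V \<times> V" "r2 \<subseteq> V \<times> V"
    using assms(2) by (auto simp: realizer_def strict_linorder_on_def)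
  then have "finite (Pow r1 \<times> Pow r2)"
    using assms(1) by (metis finite_Pow_iff finite_SigmaI finite_subset)
  moreover have "?S k \<in> Pow r1 \<times> Pow r2" for k
    using lhd_seq_le_realizer[OF assms(2,3), of k] by (simp add: less_eq_prod_def mem_Times_iff)
  ultimately have "finite (range ?S)"
    by (meson finite_subset image_subsetI)
  then have "\<exists>N. (\<forall>n\<le>N. \<forall>m\<le>N. m < n \<longrightarrow> ?S m < ?S n) \<and> (\<forall>n\<ge>N. ?S N = ?S n)"
    by (rule finite_mono_remains_stable_implies_strict_prefix[OF _ mono_lhd_seq]) simp
  then have "\<exists>m. \<forall>k\<ge>m. ?S k = ?S m" by metis
  define N where "N = (LEAST m. \<forall>k\<ge>m. ?S k = ?S m)"
  have "\<forall>k\<ge>N. ?S k = ?S N"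
    unfolding N_def using \<open>\<exists>m. \<forall>k\<ge>m. ?S k = ?S m\<close> by (rule LeastI_ex)
  then have "?S (Suc N) = ?S N" by (meson le_SucI order_refl)
  moreover have "lhd_lim V E w = ?S N" by (simp only: lhd_lim_def N_def)
  ultimately show thesis using that by blast
qed

definition E_closed :: "'a set set \<Rightarrow> 'a rel \<Rightarrow> 'a rel \<Rightarrow> bool" where
  "E_closed E L1 L2 \<longleftrightarrow> closE_comp E L1 L2 \<subseteq> L1 \<and> closE_comp E L2 L1 \<subseteq> L2"

lemma E_closed_sym: "E_closed E L1 L2 \<Longrightarrow> E_closed E L2 L1"
  by (simp add: E_closed_def)

lemma E_closed_adjacentD:
  assumes "E_closed E L1 L2" "(u, v) \<in> L1" "{u, v} \<in> E"
  shows "(v, u) \<in> L2"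
proof -
  have "(v, u) \<in> closE_comp E L2 L1" using assms(2,3) by (simp add: closE_comp_def)
  then show ?thesis using assms(1) by (auto simp: E_closed_def)
qed

lemma E_closed_nonadjacentD:
  assumes "E_closed E L1 L2" "(u, v) \<in> L1" "{u, v} \<notin> E"
  shows "(u, v) \<in> L2"
proof -
  have "(u, v) \<in> closE_comp E L2 L1" using assms(2,3) by (simp add: closE_comp_def)
  then show ?thesis using assms(1) by (auto simp: E_closed_def)
qed

lemma E_closed_comparable:
  "E_closed E L1 L2 \<Longrightarrow> (u, v) \<in> L1 \<Longrightarrow> (u, v) \<in> L2 \<or> (v, u) \<in> L2"
  by (cases "{u, v} \<in> E") (auto dest: E_closed_adjacentD E_closed_nonadjacentD)

lemma E_closed_total_on: "E_closed E L1 L2 \<Longrightarrow> total_on V L1 \<Longrightarrow> total_on V L2"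
  unfolding total_on_def by (meson E_closed_comparable)

lemma closT_closE_fixpoint_iff:
  "closT (closE E (L1, L2)) = (L1, L2) \<longleftrightarrow> trans L1 \<and> trans L2 \<and> E_closed E L1 L2"
proof -
  have "(closE_comp E L M)\<^sup>+ = L \<longleftrightarrow> trans L \<and> closE_comp E L M \<subseteq> L" for L M :: "'a rel"
  proof
    assume eq: "(closE_comp E L M)\<^sup>+ = L"
    show "trans L \<and> closE_comp E L M \<subseteq> L"
      using trans_trancl[of "closE_comp E L M"] r_into_trancl'[of _ "closE_comp E L M"]
      unfolding eq by blast
  next
    assume "trans L \<and> closE_comp E L M \<subseteq> L"
    then show "(closE_comp E L M)\<^sup>+ = L"
      using subset_trancl_closE_comp[of L E M] trancl_mono[of _ "closE_comp E L M" L] by auto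
  qed
  then show ?thesis by (auto simp: closT_def closE_def E_closed_def)
qed

text \<open>Two L1-incomparable vertices m, m' are also L2-incomparable, and any x comparable
  with both lies on the same side of them; an edge from x to one of them and a non-edge to the
  other would then order m and m' in L2.\<close>
lemma E_closed_same_adjacency:
  assumes "trans L1" "trans L2" "E_closed E L1 L2"
    and "(m, m') \<notin> L1" "(m', m) \<notin> L1"
    and "(x, m) \<in> L1 \<or> (m, x) \<in> L1" "(x, m') \<in> L1 \<or> (m', x) \<in> L1"
  shows "{x, m} \<in> E \<longleftrightarrow> {x, m'} \<in> E"
proof -
  have closed21: "E_closed E L2 L1" using assms(3) by (rule E_closed_sym)
  have no_mixed_adjacency: False if "{x, a} \<in> E" "{x, b} \<notin> E" "(a, b) \<notin> L1" "(b, a) \<notin> L1"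
    and "(x, a) \<in> L1 \<or> (a, x) \<in> L1" "(x, b) \<in> L1 \<or> (b, x) \<in> L1" for a b
  proof -
    have incomparable2: "(a, b) \<notin> L2" "(b, a) \<notin> L2"
      using that(3,4) E_closed_comparable[OF closed21] by blast+
    from that(3-6) assms(1) consider "(x, a) \<in> L1" "(x, b) \<in> L1" | "(a, x) \<in> L1" "(b, x) \<in> L1"
      by (meson transD)
    then show False
    proof cases
      case 1
      then have "(a, x) \<in> L2" "(x, b) \<in> L2"
        using that(1,2) E_closed_adjacentD[OF assms(3)] E_closed_nonadjacentD[OF assms(3)] by blast+
      then show False using assms(2) incomparable2 by (meson transD)
    next
      case 2
      then have "(x, a) \<in> L2" "(b, x) \<in> L2"
        using that(1,2) E_closed_adjacentD[OF assms(3)] E_closed_nonadjacentD[OF assms(3)]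
        by (simp_all add: insert_commute)
      then show False using assms(2) incomparable2 by (meson transD)
    qed
  qed
  then show ?thesis using no_mixed_adjacency[of m m'] no_mixed_adjacency[of m' m] assms(4-7) by blast
qed

definition incomparable_on :: "'a set \<Rightarrow> 'a rel \<Rightarrow> 'a rel" where
  "incomparable_on V L = {(u, v). u \<in> V \<and> v \<in> V \<and> u \<noteq> v \<and> (u, v) \<notin> L \<and> (v, u) \<notin> L}"

lemma incomparable_class_subset: "a \<in> V \<Longrightarrow> (incomparable_on V L)\<^sup>* `` {a} \<subseteq> V"
proof
  fix y assume "a \<in> V" "y \<in> (incomparable_on V L)\<^sup>* `` {a}"
  then have "(a, y) \<in> (incomparable_on V L)\<^sup>*" by simp
  then show "y \<in> V" using \<open>a \<in> V\<close>
    by (induction rule: rtrancl_induct) (auto simp: incomparable_on_def)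
qed

lemma incomparable_class_is_module:
  assumes "trans L1" "trans L2" "E_closed E L1 L2" "a \<in> V"
  shows "is_module V E ((incomparable_on V L1)\<^sup>* `` {a})" (is "is_module V E ?M")
  unfolding is_module_def
proof (intro conjI ballI)
  show "?M \<subseteq> V" using assms(4) by (rule incomparable_class_subset)
  have "a \<in> ?M" by simp
  then show "?M \<noteq> {}" by blast
  fix x assume x: "x \<in> V - ?M"
  have comparable: "(x, y) \<in> L1 \<or> (y, x) \<in> L1" if "y \<in> ?M" for y
  proof (rule ccontr)
    assume "\<not> ?thesis"
    then have "(y, x) \<in> incomparable_on V L1"
      using that x \<open>?M \<subseteq> V\<close> by (auto simp: incomparable_on_def)
    with that have "x \<in> ?M" by (simp add: rtrancl_into_rtrancl)
    then show False using x by blast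
  qed
  have "{x, y} \<in> E \<longleftrightarrow> {x, a} \<in> E" if "y \<in> ?M" for y
  proof -
    from that have "(a, y) \<in> (incomparable_on V L1)\<^sup>*" by simp
    then show ?thesis
    proof (induction rule: rtrancl_induct)
      case (step y z)
      from step(1,2) have "y \<in> ?M" "z \<in> ?M" by (simp_all add: rtrancl_into_rtrancl)
      moreover from step(2) have "(y, z) \<notin> L1" "(z, y) \<notin> L1"
        by (simp_all add: incomparable_on_def)
      ultimately have "{x, y} \<in> E \<longleftrightarrow> {x, z} \<in> E"
        using E_closed_same_adjacency[OF assms(1-3)] comparable by blast
      with step(3) show ?case by blast
    qed simp
  qed
  then show "(\<forall>m\<in>?M. {x, m} \<in> E) \<or> (\<forall>m\<in>?M. {x, m} \<notin> E)" by blast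
qed

lemma E_closed_total_on_if_prime:
  assumes "prime_graph V E" "w \<in> V" "\<forall>v\<in>V. v \<noteq> w \<longrightarrow> (w, v) \<in> L1"
    and "trans L1" "trans L2" "E_closed E L1 L2"
  shows "total_on V L1"
  unfolding total_on_def
proof (intro ballI impI, rule ccontr)
  fix a b assume "a \<in> V" "b \<in> V" "a \<noteq> b" and ab: "\<not> ((a, b) \<in> L1 \<or> (b, a) \<in> L1)"
  let ?M = "(incomparable_on V L1)\<^sup>* `` {a}"
  have "(a, b) \<in> incomparable_on V L1"
    using \<open>a \<in> V\<close> \<open>b \<in> V\<close> \<open>a \<noteq> b\<close> ab by (simp add: incomparable_on_def)
  then have "b \<in> ?M" by (simp add: r_into_rtrancl)
  have "w \<notin> ?M"
  proof
    assume "w \<in> ?M"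
    then have "(a, w) \<in> (incomparable_on V L1)\<^sup>*" by simp
    then show False
    proof (cases rule: rtranclE)
      case base
      then show False using assms(3) \<open>b \<in> V\<close> \<open>a \<noteq> b\<close> ab by auto
    next
      case (step z)
      then have "z \<in> V" "z \<noteq> w" "(w, z) \<notin> L1" by (simp_all add: incomparable_on_def)
      then show False using assms(3) by blast
    qed
  qed
  have "is_module V E ?M"
    using incomparable_class_is_module[OF assms(4-6) \<open>a \<in> V\<close>] .
  then have "?M = V \<or> (\<exists>v. ?M = {v})"
    using assms(1) by (simp add: prime_graph_def)
  moreover have "?M \<noteq> V" using assms(2) \<open>w \<notin> ?M\<close> by auto
  moreover have "?M \<noteq> {v}" for v
    using \<open>b \<in> ?M\<close> \<open>a \<noteq> b\<close> by (metis Image_singleton_iff rtrancl.rtrancl_refl singletonD)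
  ultimately show False by blast
qed

lemma strict_linorder_on_subset:
  assumes "strict_linorder_on V r" "L \<subseteq> r" "trans L" "total_on V L"
  shows "strict_linorder_on V L"
  using assms by (auto simp: strict_linorder_on_def irrefl_on_def)

theorem theorem5p6:
  fixes V :: "'a set" and E :: "'a set set" and r1 r2 :: "'a rel" and w :: 'a
  assumes "permutation_graph V E"
    and "prime_graph V E"
    and "realizer V E r1 r2"
    and "w \<in> V" and "\<forall>v\<in>V. v \<noteq> w \<longrightarrow> (w, v) \<in> r1"
  shows "strict_linorder_on V (fst (lhd_lim V E w)) \<and> strict_linorder_on V (snd (lhd_lim V E w))"
proof -
  have "finite V" using assms(1) by (simp add: permutation_graph_def graph_def)
  then obtain m where lim: "lhd_lim V E w = lhd_seq V E w m"
    and fixpoint: "lhd_seq V E w (Suc m) = lhd_seq V E w m"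
    by (rule lhd_lim_stable[OF _ assms(3,5)])
  obtain L1 L2 where L: "lhd_seq V E w m = (L1, L2)" by fastforce
  have "closT (closE E (L1, L2)) = (L1, L2)"
    using fixpoint unfolding L lhd_seq.simps(2) .
  then have "trans L1" "trans L2" and closed: "E_closed E L1 L2"
    by (simp_all only: closT_closE_fixpoint_iff)
  have "L1 \<subseteq> r1" "L2 \<subseteq> r2"
    using lhd_seq_le_realizer[OF assms(3,5), of m] unfolding L by (simp_all add: less_eq_prod_def)
  have "lhd_seq V E w 0 \<le> (L1, L2)" using monoD[OF mono_lhd_seq[of V E w], of 0 m] unfolding L by simp
  then have "\<forall>v\<in>V. v \<noteq> w \<longrightarrow> (w, v) \<in> L1" by (auto simp: less_eq_prod_def)
  then have "total_on V L1"
    by (rule E_closed_total_on_if_prime[OF assms(2,4) _ \<open>trans L1\<close> \<open>trans L2\<close> closed])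
  then have "total_on V L2" by (rule E_closed_total_on[OF closed])
  have "strict_linorder_on V r1" "strict_linorder_on V r2"
    using assms(3) by (simp_all add: realizer_def)
  then show ?thesis
    unfolding lim L fst_conv snd_conv
    using strict_linorder_on_subset \<open>L1 \<subseteq> r1\<close> \<open>L2 \<subseteq> r2\<close> \<open>trans L1\<close> \<open>trans L2\<close>
      \<open>total_on V L1\<close> \<open>total_on V L2\<close> by blast
qed

end
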